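(* Let $n_0,n_1,n_\infty$ be integers with $1\le n_0\le n_1\le n_\infty$, $n=n_0+n_1+n_\infty$, and let $\mathcal{S}_{\mathrm{reg}}=\{(\xi,\eta)\in\mathbb{C}^2 : \eta^n=\xi^{n-n_0}(1-\xi)^{n-n_1}\}\setminus\{(0,0),(1,0)\}$ with the Riemannian metric $\Gamma=\frac{1}{\eta}\,d\xi\odot\frac{1}{\overline{\eta}}\,\overline{d\xi}$. Let $X$ be the holomorphic vector field on $\mathcal{S}_{\mathrm{reg}}$ given by $$X(\xi,\eta)=\eta\frac{\partial}{\partial\xi}+\frac{n-n_0}{n}\,\frac{\xi^{n-n_0-1}(1-\xi)^{n-n_1-1}\bigl(1-\frac{2n-n_0-n_1}{n-n_0}\xi\bigr)}{\eta^{n-2}}\frac{\partial}{\partial\eta}.$$ Then $X$ is the geodesic vector field for the flat Riemannian metric $\Gamma$ on $\mathcal{S}_{\mathrm{reg}}$, i.e. its (real-time) integral curves are geodesics of $(\mathcal{S}_{\mathrm{reg}},\Gamma)$.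
   Context: $X$ is tangent to $\mathcal{S}_{\mathrm{reg}}$ at every point and nowhere vanishing. A holomorphic vector field is regarded as a real vector field on the underlying real surface in the usual way. *)

theory Defs
  imports "HOL-Complex_Analysis.Complex_Analysis"
begin

definition Sreg :: "nat \<Rightarrow> nat \<Rightarrow> nat \<Rightarrow> (complex \<times> complex) set" where
  "Sreg n0 n1 ninf =
     (let n = n0 + n1 + ninf in
       {(xi, eta). eta ^ n = xi ^ (n - n0) * (1 - xi) ^ (n - n1)} - {(0, 0), (1, 0)})"

text \<open>The holomorphic vector field X, as the pair of its coefficients of d/dxi and d/deta;
  as a real vector field on the underlying real surface it is the same pair viewed in
  the real vector space complex x complex.\<close>
definition Xfield :: "nat \<Rightarrow> nat \<Rightarrow> nat \<Rightarrow> complex \<times> complex \<Rightarrow> complex \<times> complex" where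
  "Xfield n0 n1 ninf p =
     (let n = n0 + n1 + ninf; xi = fst p; eta = snd p in
       (eta,
        of_nat (n - n0) / of_nat n * xi ^ (n - n0 - 1) * (1 - xi) ^ (n - n1 - 1)
          * (1 - of_nat (2 * n - n0 - n1) / of_nat (n - n0) * xi) / eta ^ (n - 2)))"

text \<open>Geodesic equation for the conformal Riemannian metric e^(2u) (dx^2 + dy^2) on a domain
  of the complex plane (real coordinates x = Re z, y = Im z), written with the Christoffel
  symbols of the Levi-Civita connection:
  c'' + 2 <grad u, c'> c' - |c'|^2 grad u = 0, where grad u is identified with the complex
  number g such that Du(z) w = Re (cnj g * w).\<close>
definition conf_geodesic :: "(complex \<Rightarrow> real) \<Rightarrow> real set \<Rightarrow> (real \<Rightarrow> complex) \<Rightarrow> bool" where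
  "conf_geodesic u J c \<longleftrightarrow>
     open J \<and>
     (\<forall>t\<in>J. c differentiable (at t) \<and>
        (\<lambda>s. vector_derivative c (at s)) differentiable (at t) \<and>
        (\<exists>g. (u has_derivative (\<lambda>w. Re (cnj g * w))) (at (c t)) \<and>
             vector_derivative (\<lambda>s. vector_derivative c (at s)) (at t)
             + of_real (2 * Re (cnj g * vector_derivative c (at t))) * vector_derivative c (at t)
             - of_real ((cmod (vector_derivative c (at t)))\<^sup>2) * g = 0))"

text \<open>A curve gamma on an open set J of times is a geodesic of (Sreg, Gamma),
  Gamma = (1/eta) dxi . (1/cnj eta) cnj dxi: near every time it lies on the graph of a local
  holomorphic branch eta = h(xi) of the surface over an open set U (where xi is a holomorphic
  chart), and in this chart Gamma = |dxi|^2 / |h(xi)|^2 = e^(2u)|dxi|^2 with u = - ln |h|,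
  so the xi-component satisfies the geodesic equation of that metric.\<close>
definition Sreg_geodesic :: "nat \<Rightarrow> nat \<Rightarrow> nat \<Rightarrow> real set \<Rightarrow> (real \<Rightarrow> complex \<times> complex) \<Rightarrow> bool" where
  "Sreg_geodesic n0 n1 ninf J \<gamma> \<longleftrightarrow>
     open J \<and> (\<forall>t\<in>J. \<gamma> t \<in> Sreg n0 n1 ninf) \<and>
     (\<forall>t0\<in>J. \<exists>U h \<epsilon>. open U \<and> fst (\<gamma> t0) \<in> U \<and> h holomorphic_on U \<and>
        (\<forall>z\<in>U. (z, h z) \<in> Sreg n0 n1 ninf) \<and> \<epsilon> > 0 \<and>
        (\<forall>s\<in>J \<inter> ball t0 \<epsilon>. fst (\<gamma> s) \<in> U \<and> snd (\<gamma> s) = h (fst (\<gamma> s))) \<and>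
        conf_geodesic (\<lambda>z. - ln (cmod (h z))) (J \<inter> ball t0 \<epsilon>) (fst \<circ> \<gamma>))"

end

theory Submission
  imports Defs
begin

(* In the chart xi, the metric Gamma is |dxi|^2 / |h(xi)|^2, where eta = h(xi) is a local
   holomorphic branch of the curve. The xi-component of an integral curve of X solves
   xi' = eta = h(xi), and every integral curve of a holomorphic vector field h d/dxi is a
   geodesic of |dxi|^2 / |h|^2: in the flat coordinate w with dw = dxi / h it is the straight
   line w' = 1. That the curve really stays on the branch eta = h(xi) follows from continuity,
   since eta^n = h(xi)^n and the n-th roots of unity are isolated. *)

lemma has_derivative_neg_ln_norm:
  fixes h :: "complex \<Rightarrow> complex"
  assumes "(h has_field_derivative a) (at z)" "h z \<noteq> 0"
  shows "((\<lambda>z. - ln (cmod (h z))) has_derivative (\<lambda>w. - Re (a / h z * w))) (at z)"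
proof -
  have "(cmod has_derivative (\<lambda>y. inner y (sgn (h z)))) (at (h z))"
    using has_derivative_norm[OF assms(2)] by simp
  from has_derivative_compose[OF assms(1)[unfolded has_field_derivative_def] this]
  have "((\<lambda>z. cmod (h z)) has_derivative (\<lambda>w. inner (a * w) (sgn (h z)))) (at z)"
    by (simp add: o_def)
  from has_derivative_ln[OF _ this]
  have ln: "((\<lambda>z. ln (cmod (h z))) has_derivative
             (\<lambda>w. inner (a * w) (sgn (h z)) * inverse (cmod (h z)))) (at z)"
    using assms(2) by simp
  have "inner (a * w) (sgn (h z)) * inverse (cmod (h z)) = Re (a / h z * w)" for w
  proof -
    have "inner (a * w) (sgn (h z)) * inverse (cmod (h z)) = inner (a * w) (h z) / (cmod (h z))\<^sup>2"
      by (simp add: sgn_div_norm power2_eq_square divide_inverse)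
    also have "\<dots> = Re (a / h z * w)"
      using assms(2) cmod_power2[of "h z"]
      by (simp add: inner_complex_def complex_norm_square[symmetric] cmod_power2 Re_divide
          field_simps power2_eq_square)
    finally show ?thesis .
  qed
  with has_derivative_minus[OF ln] show ?thesis
    by simp
qed

lemma holomorphic_flow_geodesic_identity:
  fixes a b :: complex
  assumes "b \<noteq> 0"
  defines "g \<equiv> - cnj (a / b)"
  shows "b * a + of_real (2 * Re (cnj g * b)) * b - of_real ((cmod b)\<^sup>2) * g = 0"
proof -
  have "cnj g * b = - a"
    using assms by (simp add: g_def)
  moreover have "of_real ((cmod b)\<^sup>2) * g = - b * cnj a"
    using assms complex_norm_square[of b] by (simp add: g_def field_simps)
  moreover have "complex_of_real (2 * Re a) = a + cnj a"
    by (simp add: complex_add_cnj)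
  ultimately show ?thesis
    by (simp add: algebra_simps)
qed

lemma conf_geodesic_holomorphic_flow:
  assumes "open J" "open U" "h holomorphic_on U" "\<forall>z\<in>U. h z \<noteq> 0"
    and flow: "\<forall>t\<in>J. c t \<in> U \<and> (c has_vector_derivative h (c t)) (at t)"
  shows "conf_geodesic (\<lambda>z. - ln (cmod (h z))) J c"
  unfolding conf_geodesic_def
proof (intro conjI ballI \<open>open J\<close>)
  fix t assume "t \<in> J"
  then have cU: "c t \<in> U" and dc: "(c has_vector_derivative h (c t)) (at t)"
    using flow by auto
  show "c differentiable (at t)"
    using dc by (rule differentiableI_vector)
  have dh: "(h has_field_derivative deriv h (c t)) (at (c t))"
    using holomorphic_derivI[OF \<open>h holomorphic_on U\<close> \<open>open U\<close> cU] .
  have "((h \<circ> c) has_vector_derivative h (c t) * deriv h (c t)) (at t)"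
    using field_vector_diff_chain_at[OF dc dh] .
  then have ddc: "((\<lambda>s. vector_derivative c (at s)) has_vector_derivative h (c t) * deriv h (c t)) (at t)"
    by (rule has_vector_derivative_transform_within_open[OF _ \<open>open J\<close> \<open>t \<in> J\<close>])
       (metis comp_apply flow vector_derivative_at)
  then show "(\<lambda>s. vector_derivative c (at s)) differentiable (at t)"
    by (rule differentiableI_vector)
  have "h (c t) \<noteq> 0"
    using assms(4) cU by blast
  then show "\<exists>g. ((\<lambda>z. - ln (cmod (h z))) has_derivative (\<lambda>w. Re (cnj g * w))) (at (c t)) \<and>
      vector_derivative (\<lambda>s. vector_derivative c (at s)) (at t)
      + of_real (2 * Re (cnj g * vector_derivative c (at t))) * vector_derivative c (at t)
      - of_real ((cmod (vector_derivative c (at t)))\<^sup>2) * g = 0"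
    using has_derivative_neg_ln_norm[OF dh] holomorphic_flow_geodesic_identity[of "h (c t)"]
      vector_derivative_at[OF dc] vector_derivative_at[OF ddc]
    by (intro exI[of _ "- cnj (deriv h (c t) / h (c t))"]) simp
qed

lemma holomorphic_nth_root_near:
  fixes P :: "complex \<Rightarrow> complex"
  assumes "P holomorphic_on S" "open S" "z0 \<in> S" "w0 ^ n = P z0" "w0 \<noteq> 0" "n > 0"
  obtains U h where "open U" "z0 \<in> U" "h holomorphic_on U"
    "\<forall>z\<in>U. h z ^ n = P z \<and> h z \<noteq> 0" "h z0 = w0"
proof -
  have "P z0 \<noteq> 0"
    using assms(4-6) by auto
  moreover have "isCont P z0"
    using assms(1-3) holomorphic_on_imp_continuous_on continuous_on_eq_continuous_at by blast
  ultimately obtain r1 where r1: "r1 > 0" "\<forall>z. dist z0 z < r1 \<longrightarrow> P z \<noteq> 0"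
    using continuous_at_avoid by blast
  obtain r2 where r2: "r2 > 0" "ball z0 r2 \<subseteq> S"
    using assms(2,3) open_contains_ball by blast
  define U where "U = ball z0 (min r1 r2)"
  have U: "open U" "z0 \<in> U" "U \<subseteq> S" "\<forall>z\<in>U. P z \<noteq> 0"
    using r1 r2 by (auto simp: U_def)
  moreover have "convex U"
    by (simp add: U_def)
  ultimately obtain g where g: "g holomorphic_on U" "\<And>z. z \<in> U \<Longrightarrow> exp (g z) = P z"
    using holomorphic_logarithm_exists[of U P z0] holomorphic_on_subset[OF assms(1)] by metis
  define \<omega> where "\<omega> = w0 / exp (g z0 / n)"
  define h where "h z = \<omega> * exp (g z / n)" for z
  have root: "exp (g z / n) ^ n = exp (g z)" for z
    using assms(6) by (simp flip: exp_of_nat_mult)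
  have "\<omega> ^ n = 1"
    using assms(4,5) U g root by (simp add: \<omega>_def power_divide)
  then have "\<forall>z\<in>U. h z ^ n = P z \<and> h z \<noteq> 0"
    using g root assms(6) by (auto simp: h_def power_mult_distrib power_0_left)
  moreover have "h holomorphic_on U"
    unfolding h_def using g(1) assms(6) by (intro holomorphic_intros) auto
  moreover have "h z0 = w0"
    by (simp add: h_def \<omega>_def)
  ultimately show ?thesis
    using that U by auto
qed

lemma eventually_eq_if_powers_eq:
  fixes f g :: "'a::t2_space \<Rightarrow> complex"
  assumes "isCont f t0" "isCont g t0" "g t0 \<noteq> 0" "f t0 = g t0" "n > 0"
    and "eventually (\<lambda>t. f t ^ n = g t ^ n) (nhds t0)"
  shows "eventually (\<lambda>t. f t = g t) (nhds t0)"
proof -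
  have "isCont (\<lambda>t. f t / g t) t0"
    using assms(1-3) by (rule isCont_divide)
  then have "((\<lambda>t. f t / g t) \<longlongrightarrow> f t0 / g t0) (nhds t0)"
    unfolding isCont_def by (rule tendsto_at_iff_tendsto_nhds[THEN iffD1])
  then have "((\<lambda>t. f t / g t) \<longlongrightarrow> 1) (nhds t0)"
    using assms(3,4) by simp
  define R where "R = {z::complex. z ^ n = 1} - {1}"
  have "open (- R)"
    unfolding R_def using finite_roots_unity[of n] \<open>n > 0\<close>
    by (intro open_Compl finite_imp_closed) auto
  from topological_tendstoD[OF \<open>(_ \<longlongrightarrow> 1) _\<close> this]
  have "eventually (\<lambda>t. f t / g t \<in> - R) (nhds t0)"
    by (simp add: R_def)
  moreover have "eventually (\<lambda>t. g t \<noteq> 0) (nhds t0)"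
    using assms(2,3) by (simp add: isCont_def tendsto_at_iff_tendsto_nhds tendsto_imp_eventually_ne)
  ultimately show ?thesis
    using assms(6) by eventually_elim (auto simp: R_def power_divide)
qed

lemma nth_root_curve_locally_on_branch:
  fixes \<xi> \<eta> :: "real \<Rightarrow> complex"
  assumes "P holomorphic_on S" "open S" "n > 0" "open J" "t0 \<in> J" "isCont \<xi> t0" "isCont \<eta> t0"
    and on_curve: "\<forall>t\<in>J. \<xi> t \<in> S \<and> \<eta> t ^ n = P (\<xi> t) \<and> \<eta> t \<noteq> 0"
  obtains U h \<epsilon> where "open U" "h holomorphic_on U" "\<forall>z\<in>U. h z ^ n = P z \<and> h z \<noteq> 0" "\<epsilon> > 0"
    "\<forall>t\<in>ball t0 \<epsilon>. t \<in> J \<and> \<xi> t \<in> U \<and> \<eta> t = h (\<xi> t)"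
proof -
  obtain U h where U: "open U" "\<xi> t0 \<in> U" and h: "h holomorphic_on U"
      "\<forall>z\<in>U. h z ^ n = P z \<and> h z \<noteq> 0" "h (\<xi> t0) = \<eta> t0"
    using holomorphic_nth_root_near[OF assms(1,2), of "\<xi> t0" "\<eta> t0" n] assms(3,5) on_curve by metis
  have "isCont h (\<xi> t0)"
    using h(1) U holomorphic_on_imp_continuous_on continuous_on_eq_continuous_at by blast
  then have cont_h: "isCont (\<lambda>t. h (\<xi> t)) t0"
    using \<open>isCont \<xi> t0\<close> by (rule isCont_o2[rotated])
  have in_J: "eventually (\<lambda>t. t \<in> J) (nhds t0)"
    using assms(4,5) by (rule eventually_nhds_in_open)
  have "(\<xi> \<longlongrightarrow> \<xi> t0) (nhds t0)"
    using \<open>isCont \<xi> t0\<close> unfolding isCont_def by (rule tendsto_at_iff_tendsto_nhds[THEN iffD1])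
  then have in_U: "eventually (\<lambda>t. \<xi> t \<in> U) (nhds t0)"
    using U by (rule topological_tendstoD)
  have "eventually (\<lambda>t. \<eta> t ^ n = h (\<xi> t) ^ n) (nhds t0)"
    using in_J in_U by eventually_elim (use on_curve h(2) in auto)
  moreover have "h (\<xi> t0) \<noteq> 0"
    using U(2) h(2) by blast
  ultimately have "eventually (\<lambda>t. \<eta> t = h (\<xi> t)) (nhds t0)"
    using eventually_eq_if_powers_eq[OF \<open>isCont \<eta> t0\<close> cont_h _ h(3)[symmetric] assms(3)] by blast
  with in_J in_U have "eventually (\<lambda>t. t \<in> J \<and> \<xi> t \<in> U \<and> \<eta> t = h (\<xi> t)) (nhds t0)"
    by eventually_elim blast
  then obtain \<epsilon> where "\<epsilon> > 0" "\<forall>t\<in>ball t0 \<epsilon>. t \<in> J \<and> \<xi> t \<in> U \<and> \<eta> t = h (\<xi> t)"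
    by (auto simp: eventually_nhds_metric dist_commute)
  with that U(1) h(1,2) show ?thesis
    by blast
qed

lemma nth_root_curve_flow_locally_conf_geodesic:
  fixes \<xi> \<eta> :: "real \<Rightarrow> complex"
  assumes "P holomorphic_on S" "open S" "n > 0" "open J" "t0 \<in> J" "isCont \<eta> t0"
    and on_curve: "\<forall>t\<in>J. \<xi> t \<in> S \<and> \<eta> t ^ n = P (\<xi> t) \<and> \<eta> t \<noteq> 0"
    and flow: "\<forall>t\<in>J. (\<xi> has_vector_derivative \<eta> t) (at t)"
  obtains U h \<epsilon> where "open U" "h holomorphic_on U" "\<forall>z\<in>U. h z ^ n = P z \<and> h z \<noteq> 0" "\<epsilon> > 0"
    "\<forall>t\<in>J \<inter> ball t0 \<epsilon>. \<xi> t \<in> U \<and> \<eta> t = h (\<xi> t)"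
    "conf_geodesic (\<lambda>z. - ln (cmod (h z))) (J \<inter> ball t0 \<epsilon>) \<xi>"
proof -
  have "isCont \<xi> t0"
    using flow assms(5) has_vector_derivative_continuous by blast
  then obtain U h \<epsilon> where U: "open U" "h holomorphic_on U" "\<forall>z\<in>U. h z ^ n = P z \<and> h z \<noteq> 0"
      and \<epsilon>: "\<epsilon> > 0" "\<forall>t\<in>ball t0 \<epsilon>. t \<in> J \<and> \<xi> t \<in> U \<and> \<eta> t = h (\<xi> t)"
    using nth_root_curve_locally_on_branch[OF assms(1-5) _ assms(6) on_curve] by blast
  have "conf_geodesic (\<lambda>z. - ln (cmod (h z))) (J \<inter> ball t0 \<epsilon>) \<xi>"
    using assms(4) U(1-3) \<epsilon>(2) flow by (intro conf_geodesic_holomorphic_flow) auto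
  with that U \<epsilon> show ?thesis
    by blast
qed

lemma mem_Sreg_iff:
  assumes "0 < n0" "0 < n1"
  shows "(xi, eta) \<in> Sreg n0 n1 ninf \<longleftrightarrow>
    eta ^ (n0 + n1 + ninf) = xi ^ (n1 + ninf) * (1 - xi) ^ (n0 + ninf) \<and> eta \<noteq> 0"
proof -
  have exponents: "n0 + n1 + ninf - n0 = n1 + ninf" "n0 + n1 + ninf - n1 = n0 + ninf"
    by simp_all
  have "eta \<noteq> 0" if on_curve: "eta ^ (n0 + n1 + ninf) = xi ^ (n1 + ninf) * (1 - xi) ^ (n0 + ninf)"
    and regular: "(xi, eta) \<notin> {(0, 0), (1, 0)}"
  proof
    assume "eta = 0"
    with on_curve assms have "xi ^ (n1 + ninf) * (1 - xi) ^ (n0 + ninf) = 0"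
      by (simp add: zero_power)
    then have "xi = 0 \<or> xi = 1"
      by auto
    with regular \<open>eta = 0\<close> show False
      by auto
  qed
  then show ?thesis
    by (auto simp: Sreg_def exponents)
qed

theorem corollary5:
  fixes n0 n1 ninf :: nat and J :: "real set" and \<gamma> :: "real \<Rightarrow> complex \<times> complex"
  assumes "1 \<le> n0" and "n0 \<le> n1" and "n1 \<le> ninf"
    and "open J"
    and "\<forall>t\<in>J. \<gamma> t \<in> Sreg n0 n1 ninf"
    and "\<forall>t\<in>J. (\<gamma> has_vector_derivative Xfield n0 n1 ninf (\<gamma> t)) (at t)"
  shows "Sreg_geodesic n0 n1 ninf J \<gamma>"
proof -
  define P where "P z = z ^ (n1 + ninf) * (1 - z) ^ (n0 + ninf)" for z :: complex
  have Sreg: "(z, w) \<in> Sreg n0 n1 ninf \<longleftrightarrow> w ^ (n0 + n1 + ninf) = P z \<and> w \<noteq> 0" for z w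
    using mem_Sreg_iff assms(1,2) by (simp add: P_def)
  have on_curve: "\<forall>t\<in>J. (fst \<circ> \<gamma>) t \<in> UNIV \<and> snd (\<gamma> t) ^ (n0 + n1 + ninf) = P ((fst \<circ> \<gamma>) t)
      \<and> snd (\<gamma> t) \<noteq> 0"
    using assms(5) Sreg by (metis UNIV_I comp_apply prod.collapse)
  have flow: "\<forall>t\<in>J. ((fst \<circ> \<gamma>) has_vector_derivative snd (\<gamma> t)) (at t)"
    using has_derivative_fst assms(6)
    by (fastforce simp: has_vector_derivative_def Xfield_def Let_def o_def)
  have cont: "isCont (\<lambda>t. snd (\<gamma> t)) t0" if "t0 \<in> J" for t0
    using assms(6) that has_vector_derivative_continuous continuous_snd by blast
  have P: "P holomorphic_on UNIV" "0 < n0 + n1 + ninf"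
    using assms(1) unfolding P_def by (auto intro!: holomorphic_intros)
  have "\<exists>U h \<epsilon>. open U \<and> fst (\<gamma> t0) \<in> U \<and> h holomorphic_on U \<and>
      (\<forall>z\<in>U. (z, h z) \<in> Sreg n0 n1 ninf) \<and> \<epsilon> > 0 \<and>
      (\<forall>s\<in>J \<inter> ball t0 \<epsilon>. fst (\<gamma> s) \<in> U \<and> snd (\<gamma> s) = h (fst (\<gamma> s))) \<and>
      conf_geodesic (\<lambda>z. - ln (cmod (h z))) (J \<inter> ball t0 \<epsilon>) (fst \<circ> \<gamma>)" if t0: "t0 \<in> J" for t0
  proof -
    obtain U h \<epsilon> where U: "open U" "h holomorphic_on U"
        "\<forall>z\<in>U. h z ^ (n0 + n1 + ninf) = P z \<and> h z \<noteq> 0" and "\<epsilon> > 0"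
      and branch: "\<forall>t\<in>J \<inter> ball t0 \<epsilon>. (fst \<circ> \<gamma>) t \<in> U \<and> snd (\<gamma> t) = h ((fst \<circ> \<gamma>) t)"
      and "conf_geodesic (\<lambda>z. - ln (cmod (h z))) (J \<inter> ball t0 \<epsilon>) (fst \<circ> \<gamma>)"
      by (rule nth_root_curve_flow_locally_conf_geodesic[OF P(1) open_UNIV P(2) assms(4) t0 cont[OF t0]
            on_curve flow])
    moreover have "fst (\<gamma> t0) \<in> U"
      using branch t0 \<open>\<epsilon> > 0\<close> by simp
    ultimately show ?thesis
      using Sreg by (intro exI[of _ U] exI[of _ h] exI[of _ \<epsilon>]) auto
  qed
  with assms(4,5) show ?thesis
    unfolding Sreg_geodesic_def by blast
qed

end
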